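(* Let $G$ be a finite, simple, connected graph without isolated vertices. Then Dom has a winning strategy in the Sepy-start Disjoint Domination Game played on $G$.
   Context: For a vertex $v$ of a graph $G$, $N[v]$ denotes its closed neighborhood ($v$ together with its neighbors). The Disjoint Domination Game on an isolate-free graph $G$ is played by two players, Dom and Sepy, with the color set $\{p,b\}$ (purple and blue). At any stage, $V_p$ and $V_b$ denote the sets of vertices colored $p$ and $b$, respectively, and for a color $c$ we write $\bar c$ for the other color. The players alternately make moves; either player may use either color. A move consists of choosing a vertex $v$ and a color $c\in\{p,b\}$ such that (i) $v$ is not yet colored, and (ii) there is a vertex $u\in N[v]$ with $N[u]\cap V_c=\emptyset$ (evaluated before the move); then $v$ receives color $c$. A player must make a legal move on his turn (no passing). The game terminates as soon as one of the following holds: (s* ) some vertex $v$ has a monochromatic closed neighborhood, i.e. $N[v]\subseteq V_p$ or $N[v]\subseteq V_b$ — then Sepy wins; (d* ) both $V_p$ and $V_b$ are dominating sets of $G$ — then Dom wins. In the Sepy-start game, Sepy makes the first move. *)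

theory Defs
  imports Main
begin

definition simple_graph :: "'a set \<Rightarrow> ('a \<Rightarrow> 'a \<Rightarrow> bool) \<Rightarrow> bool" where
  "simple_graph V E \<longleftrightarrow> finite V \<and> (\<forall>u v. E u v \<longrightarrow> u \<in> V \<and> v \<in> V)
     \<and> (\<forall>u v. E u v \<longrightarrow> E v u) \<and> (\<forall>u. \<not> E u u)"

definition connected_graph :: "'a set \<Rightarrow> ('a \<Rightarrow> 'a \<Rightarrow> bool) \<Rightarrow> bool" where
  "connected_graph V E \<longleftrightarrow> (\<forall>u\<in>V. \<forall>v\<in>V. E\<^sup>*\<^sup>* u v)"

definition isolate_free :: "'a set \<Rightarrow> ('a \<Rightarrow> 'a \<Rightarrow> bool) \<Rightarrow> bool" where
  "isolate_free V E \<longleftrightarrow> (\<forall>v\<in>V. \<exists>u. E v u)"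

definition cnbh :: "'a set \<Rightarrow> ('a \<Rightarrow> 'a \<Rightarrow> bool) \<Rightarrow> 'a \<Rightarrow> 'a set" where
  "cnbh V E v = insert v {u \<in> V. E v u}"

datatype color = Purple | Blue

type_synonym 'a position = "'a \<Rightarrow> color option"

definition color_class :: "'a set \<Rightarrow> 'a position \<Rightarrow> color \<Rightarrow> 'a set" where
  "color_class V col c = {v \<in> V. col v = Some c}"

definition dominating :: "'a set \<Rightarrow> ('a \<Rightarrow> 'a \<Rightarrow> bool) \<Rightarrow> 'a set \<Rightarrow> bool" where
  "dominating V E D \<longleftrightarrow> D \<subseteq> V \<and> (\<forall>v\<in>V. cnbh V E v \<inter> D \<noteq> {})"

definition legal_move :: "'a set \<Rightarrow> ('a \<Rightarrow> 'a \<Rightarrow> bool) \<Rightarrow> 'a position \<Rightarrow> 'a \<Rightarrow> color \<Rightarrow> bool" where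
  "legal_move V E col v c \<longleftrightarrow> v \<in> V \<and> col v = None \<and>
     (\<exists>u\<in>cnbh V E v. cnbh V E u \<inter> color_class V col c = {})"

definition sepy_cond :: "'a set \<Rightarrow> ('a \<Rightarrow> 'a \<Rightarrow> bool) \<Rightarrow> 'a position \<Rightarrow> bool" where
  "sepy_cond V E col \<longleftrightarrow> (\<exists>v\<in>V. \<exists>c. cnbh V E v \<subseteq> color_class V col c)"

definition dom_cond :: "'a set \<Rightarrow> ('a \<Rightarrow> 'a \<Rightarrow> bool) \<Rightarrow> 'a position \<Rightarrow> bool" where
  "dom_cond V E col \<longleftrightarrow> dominating V E (color_class V col Purple)
                        \<and> dominating V E (color_class V col Blue)"

definition terminal :: "'a set \<Rightarrow> ('a \<Rightarrow> 'a \<Rightarrow> bool) \<Rightarrow> 'a position \<Rightarrow> bool" where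
  "terminal V E col \<longleftrightarrow> sepy_cond V E col \<or> dom_cond V E col"

text \<open>dom_wins V E dom_turn col: Dom has a winning strategy from position col, where
  dom_turn says whether Dom is to move. Since every move colours a new vertex of the
  finite graph, the game is finite and the least fixed point captures winning strategies.\<close>
inductive dom_wins :: "'a set \<Rightarrow> ('a \<Rightarrow> 'a \<Rightarrow> bool) \<Rightarrow> bool \<Rightarrow> 'a position \<Rightarrow> bool"
  for V E where
  finished: "\<not> sepy_cond V E col \<Longrightarrow> dom_cond V E col \<Longrightarrow> dom_wins V E t col"
| dom_move: "\<not> terminal V E col \<Longrightarrow> legal_move V E col v c \<Longrightarrow>
     dom_wins V E False (col(v := Some c)) \<Longrightarrow> dom_wins V E True col"
| sepy_move: "\<not> terminal V E col \<Longrightarrow> (\<exists>v c. legal_move V E col v c) \<Longrightarrow>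
     (\<forall>v c. legal_move V E col v c \<longrightarrow> dom_wins V E True (col(v := Some c))) \<Longrightarrow>
     dom_wins V E False col"

end

theory Submission
  imports Defs
begin

text \<open>Dom keeps the position paired: every coloured vertex has a neighbour of the other
  colour. A paired position has no monochromatic closed neighbourhood, and if it is not yet
  won, some uncoloured vertex misses a colour in its closed neighbourhood, so Sepy can move.
  Suppose Sepy colours v with c. If v has no neighbour of the other colour, legality of
  Sepy's move forces v to have an uncoloured neighbour, and Dom gives it the other colour.
  Otherwise the position is still paired, and on a walk from an undominated vertex to v in
  the connected graph there is an uncoloured vertex next to a coloured one, on which Dom
  plays the opposite colour. Either way the position is paired again; the game is finite,
  so Dom wins.\<close>

fun opp_color :: "color \<Rightarrow> color" where
  "opp_color Purple = Blue"
| "opp_color Blue = Purple"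

lemma opp_color_neq [simp]: "opp_color c \<noteq> c" "c \<noteq> opp_color c"
  by (cases c; simp)+

lemma opp_color_opp_color [simp]: "opp_color (opp_color c) = c"
  by (cases c) simp_all

lemma color_eq_or_opp_color: "c = d \<or> c = opp_color d"
  by (cases c; cases d) simp_all

lemma simple_graph_edgeD:
  assumes "simple_graph V E" and "E u v"
  shows "u \<in> V" "v \<in> V" "E v u" "u \<noteq> v"
  using assms unfolding simple_graph_def by blast+

lemma self_in_cnbh [simp]: "v \<in> cnbh V E v"
  by (simp add: cnbh_def)

lemma neighbour_in_cnbh: "simple_graph V E \<Longrightarrow> E u v \<Longrightarrow> v \<in> cnbh V E u"
  by (simp add: cnbh_def simple_graph_edgeD)

lemma in_cnbh_neighbour: "w \<in> cnbh V E v \<Longrightarrow> w \<noteq> v \<Longrightarrow> E v w"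
  by (simp add: cnbh_def)

lemma in_color_class_iff [simp]: "x \<in> color_class V col c \<longleftrightarrow> x \<in> V \<and> col x = Some c"
  by (simp add: color_class_def)

definition paired :: "'a set \<Rightarrow> ('a \<Rightarrow> 'a \<Rightarrow> bool) \<Rightarrow> 'a position \<Rightarrow> bool" where
  "paired V E col \<longleftrightarrow>
     (\<forall>x\<in>V. \<forall>d. col x = Some d \<longrightarrow> (\<exists>w. E x w \<and> col w = Some (opp_color d)))"

lemma paired_empty: "paired V E (\<lambda>_. None)"
  by (simp add: paired_def)

lemma paired_fun_upd:
  assumes "simple_graph V E" and "paired V E col" and "col y = None" and "E y z"
    and "col z = Some (opp_color c)"
  shows "paired V E (col(y := Some c))"
  using assms(2-5) simple_graph_edgeD(4)[OF assms(1,4)] unfolding paired_def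
  by (smt (verit) fun_upd_apply option.distinct(1) option.inject)

lemma paired_fun_upd_edge:
  assumes "simple_graph V E" and "paired V E col" and "col v = None" and "col w = None"
    and "E v w"
  shows "paired V E (col(v := Some c, w := Some (opp_color c)))"
  using assms(2-5) simple_graph_edgeD(3,4)[OF assms(1,5)] unfolding paired_def
  by (smt (verit) fun_upd_apply opp_color_opp_color option.distinct(1) option.inject)

lemma paired_cnbh_meets_color_class:
  assumes "simple_graph V E" and "paired V E col" and "x \<in> V" and "col x = Some d"
  shows "cnbh V E x \<inter> color_class V col c \<noteq> {}"
proof (cases "c = d")
  case True
  with assms have "x \<in> cnbh V E x \<inter> color_class V col c"
    by simp
  then show ?thesis
    by blast
next
  case False
  then have "c = opp_color d"
    using color_eq_or_opp_color by blast
  moreover obtain w where "E x w" and "col w = Some (opp_color d)"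
    using assms(2-4) unfolding paired_def by blast
  ultimately have "w \<in> cnbh V E x \<inter> color_class V col c"
    using neighbour_in_cnbh[OF assms(1) \<open>E x w\<close>] simple_graph_edgeD(2)[OF assms(1) \<open>E x w\<close>]
    by simp
  then show ?thesis
    by blast
qed

lemma paired_not_sepy_cond:
  assumes "simple_graph V E" and "paired V E col"
  shows "\<not> sepy_cond V E col"
proof
  assume "sepy_cond V E col"
  then obtain x c where "x \<in> V" and mono: "cnbh V E x \<subseteq> color_class V col c"
    unfolding sepy_cond_def by blast
  from subsetD[OF mono self_in_cnbh] have "col x = Some c"
    by simp
  with assms \<open>x \<in> V\<close> have "cnbh V E x \<inter> color_class V col (opp_color c) \<noteq> {}"
    by (rule paired_cnbh_meets_color_class)
  with mono show False
    by auto
qed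

lemma not_dom_cond_undominated:
  "\<not> dom_cond V E col \<Longrightarrow> \<exists>u\<in>V. \<exists>c. cnbh V E u \<inter> color_class V col c = {}"
  unfolding dom_cond_def dominating_def color_class_def by blast

lemma paired_undominated_uncoloured:
  assumes "simple_graph V E" and "paired V E col" and "u \<in> V"
    and "cnbh V E u \<inter> color_class V col c = {}"
  shows "col u = None"
  using assms paired_cnbh_meets_color_class by fastforce

lemma paired_legal_move_exists:
  assumes "simple_graph V E" and "paired V E col" and "\<not> dom_cond V E col"
  shows "\<exists>v c. legal_move V E col v c"
proof -
  obtain u c where "u \<in> V" and miss: "cnbh V E u \<inter> color_class V col c = {}"
    using not_dom_cond_undominated[OF assms(3)] by blast
  then have "legal_move V E col u c"
    unfolding legal_move_def
    using paired_undominated_uncoloured[OF assms(1,2) \<open>u \<in> V\<close> miss] self_in_cnbh[of u V E] by blast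
  then show ?thesis
    by blast
qed

text \<open>The witness u of legality excludes that all neighbours of v carry colour c;
  for \<open>u = v\<close> this needs v to have a neighbour at all.\<close>

lemma legal_move_neighbour_not_color:
  assumes "simple_graph V E" and "isolate_free V E" and "legal_move V E col v c"
  shows "\<exists>w. E v w \<and> col w \<noteq> Some c"
proof -
  obtain u where u: "u \<in> cnbh V E v" and miss: "cnbh V E u \<inter> color_class V col c = {}"
    and "v \<in> V"
    using assms(3) unfolding legal_move_def by blast
  show ?thesis
  proof (cases "u = v")
    case True
    obtain w where "E v w"
      using assms(2) \<open>v \<in> V\<close> unfolding isolate_free_def by blast
    with True miss show ?thesis
      using neighbour_in_cnbh[OF assms(1) \<open>E v w\<close>] simple_graph_edgeD(2)[OF assms(1) \<open>E v w\<close>]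
      by auto
  next
    case False
    with u have "E v u"
      by (rule in_cnbh_neighbour)
    moreover have "u \<notin> color_class V col c"
      using miss self_in_cnbh[of u V E] by blast
    ultimately show ?thesis
      using simple_graph_edgeD(2)[OF assms(1) \<open>E v u\<close>] by auto
  qed
qed

lemma paired_legal_move_not_sepy_cond:
  assumes "simple_graph V E" and "isolate_free V E" and "paired V E col"
    and "legal_move V E col v c"
  shows "\<not> sepy_cond V E (col(v := Some c))"
proof
  assume "sepy_cond V E (col(v := Some c))"
  then obtain x d where "x \<in> V" and mono: "cnbh V E x \<subseteq> color_class V (col(v := Some c)) d"
    unfolding sepy_cond_def by blast
  have "col v = None"
    using assms(4) unfolding legal_move_def by blast
  show False
  proof (cases "x = v")
    case True
    then have "v \<in> color_class V (col(v := Some c)) d"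
      using subsetD[OF mono self_in_cnbh] by blast
    then have "d = c"
      by simp
    obtain w where "E v w" and "col w \<noteq> Some c"
      using legal_move_neighbour_not_color[OF assms(1,2,4)] by blast
    moreover have "(col(v := Some c)) w = Some c"
      using subsetD[OF mono[unfolded True] neighbour_in_cnbh[OF assms(1) \<open>E v w\<close>]] \<open>d = c\<close>
      by simp
    ultimately show False
      using simple_graph_edgeD(4)[OF assms(1) \<open>E v w\<close>] by simp
  next
    case False
    then have "col x = Some d"
      using subsetD[OF mono self_in_cnbh] by simp
    then obtain w where "E x w" and "col w = Some (opp_color d)"
      using assms(3) \<open>x \<in> V\<close> unfolding paired_def by blast
    moreover have "(col(v := Some c)) w = Some d"
      using subsetD[OF mono neighbour_in_cnbh[OF assms(1) \<open>E x w\<close>]] by simp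
    ultimately show False
      using \<open>col v = None\<close> by (cases "w = v") auto
  qed
qed

lemma rtranclp_boundary_edge:
  assumes "E\<^sup>*\<^sup>* a b" and "P a" and "\<not> P b"
  shows "\<exists>x y. P x \<and> \<not> P y \<and> E x y"
  using assms by (induction rule: rtranclp_induct) blast+

text \<open>On a walk from an undominated uncoloured vertex to x, the last vertex a that is still
  undominated and uncoloured and its successor b yield the move: at a if b is coloured, at b
  otherwise.\<close>

lemma paired_extending_move:
  assumes "simple_graph V E" and "connected_graph V E" and "paired V E col"
    and "\<not> dom_cond V E col" and "x \<in> V" and "col x = Some d"
  shows "\<exists>y c. legal_move V E col y c \<and> (\<exists>z. E y z \<and> col z = Some (opp_color c))"
proof -
  define P where "P a \<longleftrightarrow> a \<in> V \<and> col a = None \<and> (\<exists>c. cnbh V E a \<inter> color_class V col c = {})"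
    for a
  obtain u where "P u"
    using not_dom_cond_undominated[OF assms(4)] paired_undominated_uncoloured[OF assms(1,3)]
    unfolding P_def by blast
  moreover have "\<not> P x" and "E\<^sup>*\<^sup>* u x"
    using assms(2,5,6) \<open>P u\<close> unfolding P_def connected_graph_def by auto
  ultimately obtain a b where "P a" and "\<not> P b" and "E a b"
    using rtranclp_boundary_edge by metis
  then obtain c where "a \<in> V" "col a = None" and miss: "cnbh V E a \<inter> color_class V col c = {}"
    unfolding P_def by blast
  have "b \<in> V" and "b \<in> cnbh V E a" and "a \<in> cnbh V E b"
    using \<open>E a b\<close> neighbour_in_cnbh[OF assms(1)] simple_graph_edgeD[OF assms(1) \<open>E a b\<close>]
    by auto
  show ?thesis
  proof (cases "col b")
    case (Some e)
    with \<open>b \<in> V\<close> \<open>b \<in> cnbh V E a\<close> miss have "e \<noteq> c"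
      by auto
    then have "e = opp_color c"
      using color_eq_or_opp_color[of e c] by simp
    have "legal_move V E col a c"
      unfolding legal_move_def using \<open>a \<in> V\<close> \<open>col a = None\<close> miss self_in_cnbh[of a V E] by blast
    with \<open>E a b\<close> Some \<open>e = opp_color c\<close> show ?thesis
      by blast
  next
    case None
    with \<open>\<not> P b\<close> \<open>b \<in> V\<close> have "cnbh V E b \<inter> color_class V col (opp_color c) \<noteq> {}"
      unfolding P_def by blast
    then obtain z where "z \<in> cnbh V E b" and z: "col z = Some (opp_color c)"
      by auto
    with None have "E b z"
      using in_cnbh_neighbour[of z V E b] by (cases "z = b") auto
    moreover have "legal_move V E col b c"
      unfolding legal_move_def using \<open>b \<in> V\<close> None \<open>a \<in> cnbh V E b\<close> miss by blast
    ultimately show ?thesis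
      using z by blast
  qed
qed

lemma paired_response:
  assumes "simple_graph V E" and "connected_graph V E" and "isolate_free V E"
    and "paired V E col" and "legal_move V E col v c"
    and "\<not> dom_cond V E (col(v := Some c))"
  shows "\<exists>y c'. legal_move V E (col(v := Some c)) y c'
    \<and> paired V E (col(v := Some c, y := Some c'))"
proof -
  have "v \<in> V" and "col v = None"
    using assms(5) unfolding legal_move_def by blast+
  show ?thesis
  proof (cases "\<exists>w. E v w \<and> col w = Some (opp_color c)")
    case True
    then have paired': "paired V E (col(v := Some c))"
      using paired_fun_upd[OF assms(1,4) \<open>col v = None\<close>] by blast
    then obtain y c' z where y: "legal_move V E (col(v := Some c)) y c'"
      and "E y z" and "(col(v := Some c)) z = Some (opp_color c')"
      using paired_extending_move[OF assms(1,2) _ assms(6) \<open>v \<in> V\<close>] by fastforce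
    moreover have "(col(v := Some c)) y = None"
      using y unfolding legal_move_def by blast
    ultimately show ?thesis
      using paired_fun_upd[OF assms(1) paired'] by blast
  next
    case False
    obtain w where "E v w" and "col w \<noteq> Some c"
      using legal_move_neighbour_not_color[OF assms(1,3,5)] by blast
    with False have "col w = None"
      using color_eq_or_opp_color[of _ c] by (cases "col w") auto
    have "w \<in> V" and "v \<in> cnbh V E w" and "w \<noteq> v"
      using \<open>E v w\<close> neighbour_in_cnbh[OF assms(1)] simple_graph_edgeD[OF assms(1) \<open>E v w\<close>]
      by auto
    moreover have "cnbh V E v \<inter> color_class V (col(v := Some c)) (opp_color c) = {}"
      using False simple_graph_edgeD(4)[OF assms(1)] by (auto simp: cnbh_def split: if_splits)
    ultimately have "legal_move V E (col(v := Some c)) w (opp_color c)"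
      using \<open>col w = None\<close> unfolding legal_move_def by auto
    moreover have "paired V E (col(v := Some c, w := Some (opp_color c)))"
      using paired_fun_upd_edge[OF assms(1,4) \<open>col v = None\<close> \<open>col w = None\<close> \<open>E v w\<close>] .
    ultimately show ?thesis
      by blast
  qed
qed

lemma card_uncoloured_fun_upd_less:
  assumes "finite V" and "v \<in> V" and "col v = None"
  shows "card {x \<in> V. (col(v := Some c)) x = None} < card {x \<in> V. col x = None}"
  using assms by (intro psubset_card_mono) auto

lemma card_uncoloured_two_moves_less:
  assumes "finite V" and "legal_move V E col v c" and "legal_move V E (col(v := Some c)) y c'"
  shows "card {x \<in> V. (col(v := Some c, y := Some c')) x = None} < card {x \<in> V. col x = None}"
proof -
  have "v \<in> V" "col v = None" "y \<in> V" "(col(v := Some c)) y = None"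
    using assms(2,3) unfolding legal_move_def by blast+
  with assms(1) show ?thesis
    using card_uncoloured_fun_upd_less[of V y "col(v := Some c)" c']
      card_uncoloured_fun_upd_less[of V v col c] by linarith
qed

lemma dom_wins_paired:
  assumes "simple_graph V E" and "connected_graph V E" and "isolate_free V E"
    and "paired V E col"
  shows "dom_wins V E False col"
  using assms(4)
proof (induction "card {x \<in> V. col x = None}" arbitrary: col rule: less_induct)
  case less
  have "finite V"
    using assms(1) unfolding simple_graph_def by blast
  have not_sepy: "\<not> sepy_cond V E col"
    using paired_not_sepy_cond[OF assms(1) less.prems] .
  show ?case
  proof (cases "dom_cond V E col")
    case True
    with not_sepy show ?thesis
      by (rule dom_wins.finished)
  next
    case False
    have "dom_wins V E True (col(v := Some c))" if sepy: "legal_move V E col v c" for v c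
    proof -
      let ?col = "col(v := Some c)"
      have not_sepy': "\<not> sepy_cond V E ?col"
        using paired_legal_move_not_sepy_cond[OF assms(1,3) less.prems sepy] .
      show ?thesis
      proof (cases "dom_cond V E ?col")
        case True
        with not_sepy' show ?thesis
          by (rule dom_wins.finished)
      next
        case False
        then obtain y c' where dom: "legal_move V E ?col y c'" and "paired V E (?col(y := Some c'))"
          using paired_response[OF assms(1-3) less.prems sepy] by blast
        moreover have "card {x \<in> V. (?col(y := Some c')) x = None} < card {x \<in> V. col x = None}"
          using card_uncoloured_two_moves_less[OF \<open>finite V\<close> sepy dom] .
        ultimately have "dom_wins V E False (?col(y := Some c'))"
          using less.hyps by blast
        moreover have "\<not> terminal V E ?col"
          using False not_sepy' by (simp add: terminal_def)
        ultimately show ?thesis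
          using dom by (blast intro: dom_wins.dom_move)
      qed
    qed
    moreover have "\<not> terminal V E col"
      using False not_sepy by (simp add: terminal_def)
    ultimately show ?thesis
      using paired_legal_move_exists[OF assms(1) less.prems False] by (blast intro: dom_wins.sepy_move)
  qed
qed

theorem theorem3:
  fixes V :: "'a set" and E :: "'a \<Rightarrow> 'a \<Rightarrow> bool"
  assumes "simple_graph V E"
    and "connected_graph V E"
    and "isolate_free V E"
  shows "dom_wins V E False (\<lambda>_. None)"
  using dom_wins_paired[OF assms paired_empty] .

end
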